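(* Fix $q\in[0,1)$. For $\varepsilon\in(0,1-q)$ let $\mathcal{I}_1(\varepsilon)$ be the instance of the online volunteer notification problem with $V=1$, $S=2$, $T=2$, $g(\tau)=q(1-q)^{\tau-1}$ for $\tau\in\mathbb{N}$, arrival probabilities $\lambda_{1,1}=1$, $\lambda_{2,2}=\frac{\varepsilon}{1-q}$ (all other $\lambda_{s,t}=0$), and match probabilities $p_{1,1}=\varepsilon$, $p_{1,2}=1$. Then for every $\delta>0$ there exists $\varepsilon_0>0$ such that for all $\varepsilon\in(0,\varepsilon_0)$, every online policy completes in expectation at most $\left(\frac{1}{2-q}+\delta\right)\mathbf{LP}_{\mathcal{I}_1(\varepsilon)}$ tasks.
   Context: Online volunteer notification problem. An instance $\mathcal{I}$ consists of volunteers $[V]$, task types $[S]$, horizon $T$, arrival probabilities $\lambda_{s,t}\ge0$ with $\sum_s\lambda_{s,t}\le1$, match probabilities $p_{v,s}\in[0,1]$, and a probability mass function $g$ on the positive integers with CDF $G(\tau)=\sum_{i\le\tau}g(i)$, $G(0)=0$. In each period $t$ at most one task arrives, of type $s$ with probability $\lambda_{s,t}$, independently across periods. All volunteers start active. Upon an arrival the platform immediately and irrevocably notifies a subset of volunteers; each notified active volunteer $v$ responds positively independently with probability $p_{v,s}$; the task is completed iff at least one does. A volunteer active and notified at time $t$ becomes inactive (regardless of response) and active again at $t+Z$, $Z\sim g$ independent; inactive volunteers ignore notifications. An online policy decides whom to notify using only information available up to the current period. $\mathbf{LP}_{\mathcal{I}}=\max\sum_{t,s}\lambda_{s,t}\min\{\sum_vx_{v,s,t}p_{v,s},1\}$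 subject to $0\le x_{v,s,t}\le1$ and $\sum_{\tau=1}^t\sum_s\lambda_{s,\tau}x_{v,s,\tau}(1-G(t-\tau))\le1$ for all $v,t$. *)

theory Defs
  imports "HOL-Probability.Probability"
begin

text \<open>Volunteers are 1..nV, task types 1..nS, periods 1..nT.
  lam s t = arrival probability of type s in period t; pr v s = match probability;
  gd = probability mass function g of the inactivity duration (on positive integers;
  any missing mass 1 - sum g means the volunteer never becomes active again).\<close>

record vn_instance =
  nV :: nat
  nS :: nat
  nT :: nat
  lam :: "nat \<Rightarrow> nat \<Rightarrow> real"
  pr  :: "nat \<Rightarrow> nat \<Rightarrow> real"
  gd  :: "nat \<Rightarrow> real"

definition Gcdf :: "vn_instance \<Rightarrow> nat \<Rightarrow> real" where
  "Gcdf I \<tau> = (\<Sum>i=1..\<tau>. gd I i)"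

definition lp_feasible :: "vn_instance \<Rightarrow> (nat \<Rightarrow> nat \<Rightarrow> nat \<Rightarrow> real) \<Rightarrow> bool" where
  "lp_feasible I x \<longleftrightarrow>
     (\<forall>v\<in>{1..nV I}. \<forall>s\<in>{1..nS I}. \<forall>t\<in>{1..nT I}. 0 \<le> x v s t \<and> x v s t \<le> 1) \<and>
     (\<forall>v\<in>{1..nV I}. \<forall>t\<in>{1..nT I}.
        (\<Sum>\<tau>=1..t. \<Sum>s=1..nS I. lam I s \<tau> * x v s \<tau> * (1 - Gcdf I (t - \<tau>))) \<le> 1)"

definition lp_obj :: "vn_instance \<Rightarrow> (nat \<Rightarrow> nat \<Rightarrow> nat \<Rightarrow> real) \<Rightarrow> real" where
  "lp_obj I x = (\<Sum>t=1..nT I. \<Sum>s=1..nS I.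
       lam I s t * min (\<Sum>v=1..nV I. x v s t * pr I v s) 1)"

definition LP :: "vn_instance \<Rightarrow> real" where
  "LP I = Sup (lp_obj I ` {x. lp_feasible I x})"

text \<open>Arrival in period t: Some s (type s) or None (no task).\<close>
definition arrival_pmf :: "vn_instance \<Rightarrow> nat \<Rightarrow> nat option pmf" where
  "arrival_pmf I t = embed_pmf (\<lambda>a. case a of
       None \<Rightarrow> 1 - (\<Sum>s=1..nS I. lam I s t)
     | Some s \<Rightarrow> (if s \<in> {1..nS I} then lam I s t else 0))"

text \<open>Inactivity duration Z: Some z with probability g z (z \<ge> 1); None = never
  returns (remaining mass, only relevant if g is defective).\<close>
definition delay_pmf :: "vn_instance \<Rightarrow> nat option pmf" where
  "delay_pmf I = embed_pmf (\<lambda>z. case z of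
       None \<Rightarrow> 1 - suminf (gd I)
     | Some k \<Rightarrow> (if 1 \<le> k then gd I k else 0))"

text \<open>Observation recorded for a period: (arrival, set of active volunteers,
  set of notified volunteers, set of volunteers that responded positively).\<close>
type_synonym obs = "nat option \<times> nat set \<times> nat set \<times> nat set"

text \<open>A (possibly randomized) online policy: given the observed history of past
  periods, the type of the current arrival and the current set of active volunteers,
  it chooses a (random) set of volunteers to notify.\<close>
type_synonym policy = "obs list \<Rightarrow> nat \<Rightarrow> nat set \<Rightarrow> nat set pmf"

text \<open>Hidden state: for each volunteer, the period from which it is active again
  (None = never again).\<close>
type_synonym vstate = "nat \<Rightarrow> nat option"

definition is_active :: "vstate \<Rightarrow> nat \<Rightarrow> nat \<Rightarrow> bool" where
  "is_active r t v \<longleftrightarrow> (case r v of None \<Rightarrow> False | Some k \<Rightarrow> k \<le> t)"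

text \<open>One period: distribution of (observation, new state, task completed?).
  The current period is t = length h + 1.\<close>
definition step_pmf :: "vn_instance \<Rightarrow> policy \<Rightarrow> obs list \<Rightarrow> vstate
                         \<Rightarrow> (obs \<times> vstate \<times> bool) pmf" where
  "step_pmf I \<pi> h r =
     (let t = Suc (length h); act = {v\<in>{1..nV I}. is_active r t v} in
      bind_pmf (arrival_pmf I t) (\<lambda>a. case a of
        None \<Rightarrow> return_pmf ((None, act, {}, {}), r, False)
      | Some s \<Rightarrow>
          bind_pmf (\<pi> h s act) (\<lambda>N.
            let M = N \<inter> act in
            bind_pmf (Pi_pmf M False (\<lambda>v. bernoulli_pmf (pr I v s))) (\<lambda>resp.
            bind_pmf (Pi_pmf M None (\<lambda>v. delay_pmf I)) (\<lambda>z.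
              let R = {v\<in>M. resp v};
                  r' = (\<lambda>v. if v \<in> M then map_option (\<lambda>d. t + d) (z v) else r v)
              in return_pmf ((Some s, act, N \<inter> {1..nV I}, R), r', R \<noteq> {}))))))"

fun exp_from :: "vn_instance \<Rightarrow> policy \<Rightarrow> nat \<Rightarrow> obs list \<Rightarrow> vstate \<Rightarrow> real" where
  "exp_from I \<pi> 0 h r = 0"
| "exp_from I \<pi> (Suc n) h r =
     measure_pmf.expectation (step_pmf I \<pi> h r)
       (\<lambda>(o', r', c). (if c then 1 else 0) + exp_from I \<pi> n (h @ [o']) r')"

definition expected_completed :: "vn_instance \<Rightarrow> policy \<Rightarrow> real" where
  "expected_completed I \<pi> = exp_from I \<pi> (nT I) [] (\<lambda>_. Some 0)"

definition I1 :: "real \<Rightarrow> real \<Rightarrow> vn_instance" where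
  "I1 q \<epsilon> = \<lparr> nV = 1, nS = 2, nT = 2,
     lam = (\<lambda>s t. if s = 1 \<and> t = 1 then 1 else if s = 2 \<and> t = 2 then \<epsilon> / (1 - q) else 0),
     pr = (\<lambda>v s. if v = 1 \<and> s = 1 then \<epsilon> else if v = 1 \<and> s = 2 then 1 else 0),
     gd = (\<lambda>\<tau>. if 1 \<le> \<tau> then q * (1 - q) ^ (\<tau> - 1) else 0) \<rparr>"

end

theory Submission
  imports Defs
begin

text \<open>
  Notifying the volunteer in period 1 completes the task
  with probability \<open>\<epsilon>\<close>, but the volunteer is then back in period 2 only with
  probability q; not notifying leaves it available for period 2. Since \<open>\<epsilon> + c q = c\<close>,
  every policy completes at most c tasks in expectation. On the other hand, notifying the
  volunteer with weight \<open>1 - c\<close> in period 1 and fully in period 2 is LP-feasible with value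
  \<open>c (2 - q - \<epsilon>)\<close>, so the ratio is at most \<open>1 / (2 - q - \<epsilon>)\<close>, which tends to \<open>1 / (2 - q)\<close>.
\<close>

lemma integral_bind_pmf:
  fixes f :: "'b \<Rightarrow> real"
  assumes "\<And>y. \<bar>f y\<bar> \<le> B"
  shows "measure_pmf.expectation (bind_pmf M N) f = measure_pmf.expectation M (\<lambda>x. measure_pmf.expectation (N x) f)"
  unfolding measure_pmf_bind
  by (rule integral_bind[where K = "count_space UNIV" and B = B and B' = 1])
     (use assms in \<open>auto simp: measure_pmf.emeasure_space_1 measure_pmf_in_subprob_algebra\<close>)

lemma nn_integral_count_space_option:
  fixes f :: "'a option \<Rightarrow> ennreal"
  shows "(\<integral>\<^sup>+x. f x \<partial>count_space UNIV) = f None + (\<integral>\<^sup>+k. f (Some k) \<partial>count_space UNIV)"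
proof -
  have "(\<integral>\<^sup>+x. f x \<partial>count_space UNIV) =
      (\<integral>\<^sup>+x. f x * indicator {None} x + f x * indicator (range Some) x \<partial>count_space UNIV)"
    by (rule nn_integral_cong) (auto split: split_indicator option.split)
  also have "\<dots> = f None + (\<integral>\<^sup>+x. f x \<partial>count_space (range Some))"
    by (subst nn_integral_add) (auto simp: nn_integral_count_space_indicator)
  also have "(\<integral>\<^sup>+x. f x \<partial>count_space (range Some)) = (\<integral>\<^sup>+k. f (Some k) \<partial>count_space UNIV)"
    by (rule nn_integral_bij_count_space[symmetric]) (simp add: bij_betw_def)
  finally show ?thesis .
qed

lemma expectation_pair_bernoulli:
  fixes c :: real
  assumes "0 \<le> p" "p \<le> 1" "0 \<le> p'" "p' \<le> 1"
  shows "measure_pmf.expectation (pair_pmf (bernoulli_pmf p) (bernoulli_pmf p'))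
           (\<lambda>(b, b'). of_bool b + c * of_bool b') = p + c * p'"
proof -
  have "measure_pmf.expectation (pair_pmf (bernoulli_pmf p) (bernoulli_pmf p'))
           (\<lambda>(b, b'). of_bool b + c * of_bool b') =
        measure_pmf.expectation (pair_pmf (bernoulli_pmf p) (bernoulli_pmf p')) (\<lambda>x. of_bool (fst x)) +
        c * measure_pmf.expectation (pair_pmf (bernoulli_pmf p) (bernoulli_pmf p')) (\<lambda>x. of_bool (snd x))"
    by (simp add: case_prod_unfold integrable_measure_pmf_finite)
  then show ?thesis
    using assms by simp
qed

lemma pmf_arrival_pmf:
  assumes "\<And>s. s \<in> {1..nS I} \<Longrightarrow> 0 \<le> lam I s t" and "(\<Sum>s=1..nS I. lam I s t) \<le> 1"
  shows "pmf (arrival_pmf I t) a = (case a of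
       None \<Rightarrow> 1 - (\<Sum>s=1..nS I. lam I s t)
     | Some s \<Rightarrow> (if s \<in> {1..nS I} then lam I s t else 0))"
  unfolding arrival_pmf_def
proof (rule pmf_embed_pmf)
  let ?f = "\<lambda>a. case a of None \<Rightarrow> 1 - (\<Sum>s=1..nS I. lam I s t)
     | Some s \<Rightarrow> (if s \<in> {1..nS I} then lam I s t else 0)"
  show "0 \<le> ?f a" for a
    using assms by (auto split: option.split)
  have "(\<integral>\<^sup>+a. ennreal (?f a) \<partial>count_space UNIV) = ennreal (?f None) + (\<Sum>s=1..nS I. ennreal (lam I s t))"
    by (subst nn_integral_count_space_option, subst nn_integral_count_space'[where A = "{1..nS I}"]) auto
  also have "(\<Sum>s=1..nS I. ennreal (lam I s t)) = ennreal (\<Sum>s=1..nS I. lam I s t)"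
    using assms(1) by (rule sum_ennreal)
  also have "ennreal (?f None) + \<dots> = 1"
    using assms sum_nonneg[of "{1..nS I}" "\<lambda>s. lam I s t"] by (simp flip: ennreal_plus)
  finally show "(\<integral>\<^sup>+a. ennreal (?f a) \<partial>count_space UNIV) = 1" .
qed

lemma pmf_delay_pmf:
  assumes "\<And>k. 0 \<le> gd I k" and "gd I 0 = 0" and "gd I sums G" and "G \<le> 1"
  shows "pmf (delay_pmf I) z = (case z of None \<Rightarrow> 1 - G | Some k \<Rightarrow> gd I k)"
proof -
  let ?f = "\<lambda>z. case z of None \<Rightarrow> 1 - suminf (gd I) | Some k \<Rightarrow> (if 1 \<le> k then gd I k else 0)"
  have f: "?f = (\<lambda>z. case z of None \<Rightarrow> 1 - G | Some k \<Rightarrow> gd I k)"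
    using assms(2,3) by (auto simp: sums_iff fun_eq_iff not_le less_one split: option.split)
  have "pmf (delay_pmf I) z = ?f z"
    unfolding delay_pmf_def
  proof (rule pmf_embed_pmf)
    show "0 \<le> ?f z" for z
      unfolding f using assms by (auto split: option.split)
    have "(\<integral>\<^sup>+z. ennreal (?f z) \<partial>count_space UNIV) = ennreal (1 - G) + (\<Sum>k. ennreal (gd I k))"
      unfolding f by (simp add: nn_integral_count_space_option nn_integral_count_space_nat)
    also have "(\<Sum>k. ennreal (gd I k)) = ennreal G"
      using assms(1,3) by (simp add: suminf_ennreal2 sums_iff)
    also have "ennreal (1 - G) + ennreal G = 1"
      using assms(1,3,4) suminf_nonneg[of "gd I"] by (simp add: sums_iff flip: ennreal_plus)
    finally show "(\<integral>\<^sup>+z. ennreal (?f z) \<partial>count_space UNIV) = 1" .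
  qed
  then show ?thesis
    unfolding f .
qed

lemma map_pmf_arrival_step_pmf:
  "map_pmf (\<lambda>x. fst (fst x)) (step_pmf I \<pi> h r) = arrival_pmf I (Suc (length h))"
  unfolding step_pmf_def Let_def map_bind_pmf
  by (subst (2) bind_return_pmf'[symmetric]) (auto intro!: bind_pmf_cong simp: map_bind_pmf split: option.split)

lemma completed_in_step_pmfD:
  assumes "x \<in> set_pmf (step_pmf I \<pi> h r)" and "snd (snd x)"
  shows "fst (fst x) \<noteq> None" and "\<exists>v\<in>{1..nV I}. is_active r (Suc (length h)) v"
  using assms unfolding step_pmf_def Let_def by (force split: option.splits)+

lemma exp_from_one_period:
  "exp_from I \<pi> (Suc 0) h r = measure_pmf.prob (step_pmf I \<pi> h r) {x. snd (snd x)}"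
proof -
  have "exp_from I \<pi> (Suc 0) h r =
      measure_pmf.expectation (step_pmf I \<pi> h r) (\<lambda>x. if snd (snd x) then 1 else 0)"
    by (simp add: case_prod_unfold)
  also have "\<dots> = measure_pmf.expectation (step_pmf I \<pi> h r) (indicator {x. snd (snd x)})"
    by (rule Bochner_Integration.integral_cong) (auto simp: indicator_def)
  finally show ?thesis
    by simp
qed

lemma exp_from_one_period_le:
  "exp_from I \<pi> (Suc 0) h r \<le>
     (if \<exists>v\<in>{1..nV I}. is_active r (Suc (length h)) v
      then measure_pmf.prob (arrival_pmf I (Suc (length h))) (range Some) else 0)"
proof (cases "\<exists>v\<in>{1..nV I}. is_active r (Suc (length h)) v")
  case True
  let ?step = "step_pmf I \<pi> h r"
  have "measure_pmf.prob ?step {x. snd (snd x)} \<le> measure_pmf.prob ?step {x. fst (fst x) \<in> range Some}"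
    by (intro measure_pmf.finite_measure_mono_AE AE_pmfI) (auto dest: completed_in_step_pmfD(1))
  also have "\<dots> = measure_pmf.prob (arrival_pmf I (Suc (length h))) (range Some)"
    by (simp flip: map_pmf_arrival_step_pmf[of I \<pi> h r] vimage_def)
  finally show ?thesis
    unfolding exp_from_one_period using True by simp
next
  case False
  then have "measure_pmf.prob (step_pmf I \<pi> h r) {x. snd (snd x)} = 0"
    unfolding measure_pmf_zero_iff by (auto dest: completed_in_step_pmfD(2))
  then show ?thesis
    unfolding exp_from_one_period using False by simp
qed

lemma lp_obj_le_LP:
  assumes "\<And>s t. 0 \<le> lam I s t" and "lp_feasible I x"
  shows "lp_obj I x \<le> LP I"
proof -
  have "lp_obj I y \<le> (\<Sum>t=1..nT I. \<Sum>s=1..nS I. lam I s t)" for y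
    unfolding lp_obj_def using assms(1) by (intro sum_mono) (simp add: mult_left_le)
  then show ?thesis
    unfolding LP_def using assms(2) by (intro cSup_upper bdd_aboveI) auto
qed

lemma I1_simps [simp]:
  "nV (I1 q \<epsilon>) = 1" "nS (I1 q \<epsilon>) = 2" "nT (I1 q \<epsilon>) = 2"
  "lam (I1 q \<epsilon>) s t = (if s = 1 \<and> t = 1 then 1 else if s = 2 \<and> t = 2 then \<epsilon> / (1 - q) else 0)"
  "pr (I1 q \<epsilon>) v s = (if v = 1 \<and> s = 1 then \<epsilon> else if v = 1 \<and> s = 2 then 1 else 0)"
  "gd (I1 q \<epsilon>) \<tau> = (if 1 \<le> \<tau> then q * (1 - q) ^ (\<tau> - 1) else 0)"
  by (simp_all add: I1_def)

lemma sum_lam_I1: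
  "(\<Sum>s=1..nS (I1 q \<epsilon>). lam (I1 q \<epsilon>) s t) = (if t = 1 then 1 else if t = 2 then \<epsilon> / (1 - q) else 0)"
  by (simp add: numeral_2_eq_2)

context
  fixes q \<epsilon> :: real
  assumes q: "0 \<le> q" "q < 1" and \<epsilon>: "0 < \<epsilon>" "\<epsilon> < 1 - q"
begin

lemma gd_I1_sums: "gd (I1 q \<epsilon>) sums (if q = 0 then 0 else 1)"
proof (cases "q = 0")
  case True
  then have "gd (I1 q \<epsilon>) = (\<lambda>_. 0)"
    by (simp add: fun_eq_iff)
  then show ?thesis
    using True by simp
next
  case False
  have "(\<lambda>k. q * (1 - q) ^ k) sums (q * (1 / (1 - (1 - q))))"
    using q False by (intro sums_mult geometric_sums) auto
  then have "(\<lambda>k. gd (I1 q \<epsilon>) (Suc k)) sums 1"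
    using False by simp
  then show ?thesis
    using False sums_Suc_iff[of "gd (I1 q \<epsilon>)" 1] by simp
qed

lemma pmf_delay_pmf_I1: "pmf (delay_pmf (I1 q \<epsilon>)) (Some k) = gd (I1 q \<epsilon>) k"
  using pmf_delay_pmf[OF _ _ gd_I1_sums] q by simp

text \<open>Delay 0 has probability zero; it is listed because a volunteer notified in period 1 is
  active in period 2 exactly when its delay is at most 1.\<close>

lemma map_pmf_delay_at_most_1_I1:
  "map_pmf (\<lambda>z. z \<in> {Some 0, Some 1}) (delay_pmf (I1 q \<epsilon>)) = bernoulli_pmf q"
proof (rule pmf_eqI)
  let ?returned = "map_pmf (\<lambda>z. z \<in> {Some 0, Some 1}) (delay_pmf (I1 q \<epsilon>))"
  have returns: "measure_pmf.prob (delay_pmf (I1 q \<epsilon>)) {Some 0, Some 1} = q"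
    by (simp add: measure_measure_pmf_finite pmf_delay_pmf_I1)
  have True_preimage: "(\<lambda>z. z \<in> {Some 0, Some 1}) -` {True} = {Some 0, Some 1}"
    and False_preimage: "(\<lambda>z. z \<in> {Some 0, Some 1}) -` {False} = UNIV - {Some 0, Some 1}"
    by auto
  have "pmf ?returned True = q"
    unfolding pmf_map True_preimage by (rule returns)
  moreover have "pmf ?returned False = 1 - q"
    using measure_pmf.prob_compl[of "{Some 0, Some 1}" "delay_pmf (I1 q \<epsilon>)"]
    unfolding pmf_map False_preimage returns by simp
  ultimately show "pmf ?returned b = pmf (bernoulli_pmf q) b" for b
    using q by (cases b) simp_all
qed

lemma lam_I1_nonneg: "0 \<le> lam (I1 q \<epsilon>) s t"
  using q \<epsilon> by simp

lemma sum_lam_I1_le_1: "(\<Sum>s=1..nS (I1 q \<epsilon>). lam (I1 q \<epsilon>) s t) \<le> 1"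
  using q \<epsilon> by (simp only: sum_lam_I1) simp

lemma pmf_arrival_pmf_I1:
  "pmf (arrival_pmf (I1 q \<epsilon>) t) a = (case a of
       None \<Rightarrow> 1 - (if t = 1 then 1 else if t = 2 then \<epsilon> / (1 - q) else 0)
     | Some s \<Rightarrow> lam (I1 q \<epsilon>) s t)"
  unfolding pmf_arrival_pmf[OF lam_I1_nonneg sum_lam_I1_le_1] sum_lam_I1
  by (auto split: option.split)

lemma arrival_pmf_I1_period_1: "arrival_pmf (I1 q \<epsilon>) (Suc 0) = return_pmf (Some 1)"
  by (rule pmf_eqI) (auto simp: pmf_arrival_pmf_I1 split: option.split)

lemma arrival_pmf_I1_period_2: "measure_pmf.prob (arrival_pmf (I1 q \<epsilon>) 2) (range Some) = \<epsilon> / (1 - q)"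
proof -
  have range_Some: "range Some = UNIV - {None}"
    by (auto simp: notin_range_Some)
  show ?thesis
    unfolding range_Some using measure_pmf.prob_compl[of "{None}" "arrival_pmf (I1 q \<epsilon>) 2"]
    by (simp add: measure_pmf_single pmf_arrival_pmf_I1)
qed

lemma first_period_outcome_I1:
  "map_pmf (\<lambda>x. (snd (snd x), is_active (fst (snd x)) 2 1)) (step_pmf (I1 q \<epsilon>) \<pi> [] (\<lambda>_. Some 0)) =
   bind_pmf (\<pi> [] 1 {1}) (\<lambda>N. if 1 \<in> N then pair_pmf (bernoulli_pmf \<epsilon>) (bernoulli_pmf q)
                                else return_pmf (False, True))"
proof -
  have active: "{v \<in> {1..nV (I1 q \<epsilon>)}. is_active (\<lambda>_. Some 0) (Suc 0) v} = {1}"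
    by (auto simp: is_active_def)
  show ?thesis
    unfolding step_pmf_def Let_def list.size(3) arrival_pmf_I1_period_1 bind_return_pmf option.case active
      map_bind_pmf
    by (intro bind_pmf_cong refl)
       (auto simp: Int_absorb1 is_active_def Pi_pmf_singleton bind_map_pmf pair_pmf_def
             intro!: bind_pmf_cong split: option.split simp flip: map_pmf_delay_at_most_1_I1)
qed

lemma first_period_value_I1:
  "measure_pmf.expectation (step_pmf (I1 q \<epsilon>) \<pi> [] (\<lambda>_. Some 0))
     (\<lambda>x. of_bool (snd (snd x)) + \<epsilon> / (1 - q) * of_bool (is_active (fst (snd x)) 2 1)) = \<epsilon> / (1 - q)"
proof -
  let ?c = "\<epsilon> / (1 - q)"
  let ?g = "\<lambda>(b, a). of_bool b + ?c * of_bool a :: real"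
  let ?outcome = "\<lambda>N. if 1 \<in> N then pair_pmf (bernoulli_pmf \<epsilon>) (bernoulli_pmf q) else return_pmf (False, True)"
  have c: "0 \<le> ?c" "\<epsilon> + ?c * q = ?c"
    using q \<epsilon> by (auto simp: field_simps)
  have "measure_pmf.expectation (step_pmf (I1 q \<epsilon>) \<pi> [] (\<lambda>_. Some 0))
     (\<lambda>x. of_bool (snd (snd x)) + ?c * of_bool (is_active (fst (snd x)) 2 1)) =
     measure_pmf.expectation (bind_pmf (\<pi> [] 1 {1}) ?outcome) ?g"
    unfolding first_period_outcome_I1[symmetric] by simp
  also have "\<dots> = measure_pmf.expectation (\<pi> [] 1 {1}) (\<lambda>N. measure_pmf.expectation (?outcome N) ?g)"
    by (rule integral_bind_pmf[where B = "1 + ?c"]) (use c in auto)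
  also have "\<dots> = measure_pmf.expectation (\<pi> [] 1 {1}) (\<lambda>N. ?c)"
  proof (rule Bochner_Integration.integral_cong)
    have "measure_pmf.expectation (pair_pmf (bernoulli_pmf \<epsilon>) (bernoulli_pmf q)) ?g = \<epsilon> + ?c * q"
      using q \<epsilon> by (intro expectation_pair_bernoulli) auto
    then show "measure_pmf.expectation (?outcome N) ?g = ?c" for N
      using c by auto
  qed simp
  finally show ?thesis
    by simp
qed

lemma expected_completed_I1_le: "expected_completed (I1 q \<epsilon>) \<pi> \<le> \<epsilon> / (1 - q)"
proof -
  let ?c = "\<epsilon> / (1 - q)"
  let ?step = "step_pmf (I1 q \<epsilon>) \<pi> [] (\<lambda>_. Some 0)"
  have c: "0 \<le> ?c"
    using q \<epsilon> by simp
  have second_period: "exp_from (I1 q \<epsilon>) \<pi> (Suc 0) [o'] r' \<le> ?c * of_bool (is_active r' 2 1)" for o' r'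
  proof -
    have period_2: "Suc (length [o']) = 2"
      by simp
    show ?thesis
      using exp_from_one_period_le[of "I1 q \<epsilon>" \<pi> "[o']" r', unfolded period_2 arrival_pmf_I1_period_2]
      by (cases "is_active r' 2 1") simp_all
  qed
  have "expected_completed (I1 q \<epsilon>) \<pi> =
      measure_pmf.expectation ?step (\<lambda>x. of_bool (snd (snd x)) + exp_from (I1 q \<epsilon>) \<pi> (Suc 0) [fst x] (fst (snd x)))"
    by (simp add: expected_completed_def numeral_2_eq_2 case_prod_unfold of_bool_def)
  also have "\<dots> \<le> measure_pmf.expectation ?step (\<lambda>x. of_bool (snd (snd x)) + ?c * of_bool (is_active (fst (snd x)) 2 1))"
    using second_period c
    by (intro integral_mono' measure_pmf.integrable_const_bound[where B = "1 + ?c"] AE_pmfI) auto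
  also have "\<dots> = ?c"
    by (rule first_period_value_I1)
  finally show ?thesis .
qed

lemma lp_feasible_I1: "lp_feasible (I1 q \<epsilon>) (\<lambda>v s t. if s = 1 then 1 - \<epsilon> / (1 - q) else 1)"
proof -
  have c: "0 \<le> \<epsilon> / (1 - q)" "\<epsilon> / (1 - q) \<le> 1"
    using q \<epsilon> by auto
  have "(1 - c) * (1 - q) + c = 1 - q * (1 - c)" for c :: real
    by (simp add: algebra_simps)
  then have "(1 - \<epsilon> / (1 - q)) * (1 - q) + \<epsilon> / (1 - q) \<le> 1"
    using q c by simp
  moreover have "Gcdf (I1 q \<epsilon>) 0 = 0" "Gcdf (I1 q \<epsilon>) 1 = q"
    by (simp_all add: Gcdf_def)
  ultimately show ?thesis
    using c unfolding lp_feasible_def by (auto simp: numeral_2_eq_2 le_Suc_eq)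
qed

lemma LP_I1_ge: "\<epsilon> / (1 - q) * (2 - q - \<epsilon>) \<le> LP (I1 q \<epsilon>)"
proof -
  have "(1 - \<epsilon> / (1 - q)) * \<epsilon> \<le> 1"
    using q \<epsilon> by (intro mult_le_one) auto
  then have "lp_obj (I1 q \<epsilon>) (\<lambda>v s t. if s = 1 then 1 - \<epsilon> / (1 - q) else 1) =
      (1 - \<epsilon> / (1 - q)) * \<epsilon> + \<epsilon> / (1 - q)"
    by (simp add: lp_obj_def numeral_2_eq_2)
  also have "\<dots> = \<epsilon> / (1 - q) * (2 - q - \<epsilon>)"
    using q by (simp add: divide_simps) (simp add: algebra_simps)
  finally show ?thesis
    using lp_obj_le_LP[OF lam_I1_nonneg lp_feasible_I1] by simp
qed

end

lemma inverse_le_limit_plus_slack: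
  fixes q \<epsilon> \<delta> :: real
  assumes "0 \<le> q" "0 < \<epsilon>" "\<epsilon> < \<delta>" "\<epsilon> < 1 - q"
  shows "1 / (2 - q - \<epsilon>) \<le> 1 / (2 - q) + \<delta>"
proof -
  have denominators: "1 \<le> 2 - q" "1 \<le> 2 - q - \<epsilon>"
    using assms by auto
  then have "1 * 1 \<le> (2 - q) * (2 - q - \<epsilon>)"
    by (intro mult_mono) auto
  have "1 / (2 - q - \<epsilon>) - 1 / (2 - q) = \<epsilon> / ((2 - q) * (2 - q - \<epsilon>))"
    using denominators by (simp add: field_simps)
  also have "\<dots> \<le> \<epsilon>"
    using \<open>1 * 1 \<le> (2 - q) * (2 - q - \<epsilon>)\<close> assms(2) by (simp add: divide_le_eq)
  finally show ?thesis
    using assms(3) by simp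
qed

theorem lemma4:
  fixes q :: real
  assumes "0 \<le> q" and "q < 1"
  shows "\<forall>\<delta>>0. \<exists>\<epsilon>0>0. \<forall>\<epsilon>. 0 < \<epsilon> \<and> \<epsilon> < \<epsilon>0 \<and> \<epsilon> < 1 - q \<longrightarrow>
           (\<forall>\<pi>. expected_completed (I1 q \<epsilon>) \<pi> \<le> (1 / (2 - q) + \<delta>) * LP (I1 q \<epsilon>))"
proof (intro allI impI)
  fix \<delta> :: real
  assume "0 < \<delta>"
  show "\<exists>\<epsilon>0>0. \<forall>\<epsilon>. 0 < \<epsilon> \<and> \<epsilon> < \<epsilon>0 \<and> \<epsilon> < 1 - q \<longrightarrow>
           (\<forall>\<pi>. expected_completed (I1 q \<epsilon>) \<pi> \<le> (1 / (2 - q) + \<delta>) * LP (I1 q \<epsilon>))"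
  proof (intro exI[of _ \<delta>] conjI allI impI)
    fix \<epsilon> :: real and \<pi> :: policy
    assume \<epsilon>: "0 < \<epsilon> \<and> \<epsilon> < \<delta> \<and> \<epsilon> < 1 - q"
    let ?c = "\<epsilon> / (1 - q)"
    have "expected_completed (I1 q \<epsilon>) \<pi> \<le> ?c"
      using expected_completed_I1_le assms \<epsilon> by blast
    also have "\<dots> = 1 / (2 - q - \<epsilon>) * (?c * (2 - q - \<epsilon>))"
      using \<epsilon> by simp
    also have "\<dots> \<le> (1 / (2 - q) + \<delta>) * LP (I1 q \<epsilon>)"
      using inverse_le_limit_plus_slack[of q \<epsilon> \<delta>] LP_I1_ge[of q \<epsilon>] assms \<epsilon> \<open>0 < \<delta>\<close>
      by (intro mult_mono) auto
    finally show "expected_completed (I1 q \<epsilon>) \<pi> \<le> (1 / (2 - q) + \<delta>) * LP (I1 q \<epsilon>)" .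
  qed (rule \<open>0 < \<delta>\<close>)
qed

end
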